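(* For $n\in\mathbb{Z}$, $0<q<1$ and $t>0$, \[\mathbb{P}(\chi+S\le n)=\frac{1}{(-tq^{\frac12+n};q)_\infty},\] where $\chi$ and $S$ are independent random variables with the laws below.
   Context: $(x;q)_\infty=\prod_{j\ge0}(1-xq^j)$, $(x;q)_n=(x;q)_\infty/(xq^n;q)_\infty$, $\theta(x)=(x;q)_\infty(q/x;q)_\infty$. $\chi$ is $\mathbb{Z}_{\ge0}$-valued with $\mathbb{P}(\chi=n)=\frac{q^n}{(q;q)_n}(q;q)_\infty$; $S$ is $\mathbb{Z}$-valued with $\mathbb{P}(S=\ell)=\frac{t^\ell q^{\ell^2/2}}{(q;q)_\infty\theta(-tq^{1/2})}$. *)

theory Defs
  imports "HOL-Probability.Probability"
begin

definition qpoch_inf :: "real \<Rightarrow> real \<Rightarrow> real" where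
  "qpoch_inf x q = (\<Prod>j. (1 - x * q ^ j))"

definition qpoch :: "real \<Rightarrow> real \<Rightarrow> nat \<Rightarrow> real" where
  "qpoch x q n = (\<Prod>j<n. (1 - x * q ^ j))"

definition qtheta :: "real \<Rightarrow> real \<Rightarrow> real" where
  "qtheta q x = qpoch_inf x q * qpoch_inf (q / x) q"

definition chi_pmf :: "real \<Rightarrow> nat pmf" where
  "chi_pmf q = embed_pmf (\<lambda>n. q ^ n / qpoch q q n * qpoch_inf q q)"

definition S_pmf :: "real \<Rightarrow> real \<Rightarrow> int pmf" where
  "S_pmf q t = embed_pmf (\<lambda>l. t powr (real_of_int l) * q powr (real_of_int l ^ 2 / 2)
                              / (qpoch_inf q q * qtheta q (- t * sqrt q)))"

definition chiS_pmf :: "real \<Rightarrow> real \<Rightarrow> int pmf" where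
  "chiS_pmf q t = map_pmf (\<lambda>(m, l). int m + l) (pair_pmf (chi_pmf q) (S_pmf q t))"

end

theory Submission
  imports Defs
begin

text \<open>
  Conditioning on \<open>\<chi> = k\<close>, the mass of \<open>\<chi> + S\<close> at \<open>m\<close> is a multiple of the Euler series
  \<open>\<Sum>\<^sub>k q\<^bsup>k(k-1)/2\<^esup> w\<^sup>k / (q;q)\<^sub>k = (-w;q)\<^sub>\<infinity>\<close> with \<open>w = q\<^bsup>3/2-m\<^esup>/t\<close>; this is one factor of
  \<open>\<theta>(-t q\<^bsup>m-1/2\<^esup>)\<close>, and the quasi-periodicity \<open>\<theta>(qx) = -\<theta>(x)/x\<close> cancels the remaining
  theta factors, leaving \<open>P(\<chi> + S = m) = y / (-y;q)\<^sub>\<infinity>\<close> with \<open>y = t q\<^bsup>m-1/2\<^esup>\<close>. Since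
  \<open>(-y;q)\<^sub>\<infinity> = (1 + y) (-qy;q)\<^sub>\<infinity>\<close>, this is the increment \<open>F(m) - F(m-1)\<close> of
  \<open>F(n) = 1/(-t q\<^bsup>n+1/2\<^esup>;q)\<^sub>\<infinity>\<close>, and \<open>F(n) \<rightarrow> 0\<close> as \<open>n \<rightarrow> -\<infinity>\<close>, so the distribution
  function telescopes to \<open>F\<close>.
\<close>

section \<open>The q-Pochhammer symbol\<close>

lemma convergent_prod_qpoch:
  fixes x q :: real
  assumes "\<bar>q\<bar> < 1"
  shows "convergent_prod (\<lambda>j. 1 - x * q ^ j)"
proof -
  have "summable (\<lambda>j. norm ((1 - x * q ^ j) - 1))"
    using assms by (simp add: abs_mult power_abs summable_geometric summable_mult)
  then show ?thesis
    by (intro abs_convergent_prod_imp_convergent_prod summable_imp_abs_convergent_prod)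
qed

lemma qpoch_inf_split:
  assumes "\<bar>q\<bar> < 1"
  shows "qpoch_inf x q = qpoch x q n * qpoch_inf (x * q ^ n) q"
proof -
  have "(\<lambda>j. 1 - x * q ^ j) has_prod ((\<Prod>k<n. 1 - x * q ^ k) * (\<Prod>k. 1 - x * q ^ (k + n)))"
    by (rule has_prod_ignore_initial_segment'[OF convergent_prod_qpoch[OF assms]])
  then show ?thesis
    unfolding qpoch_inf_def qpoch_def
    by (simp add: has_prod_iff power_add mult.assoc mult.commute mult.left_commute)
qed

lemma qpoch_inf_unfold:
  assumes "\<bar>q\<bar> < 1"
  shows "qpoch_inf x q = (1 - x) * qpoch_inf (x * q) q"
  using qpoch_inf_split[OF assms, of x 1] by (simp add: qpoch_def)

lemma LIMSEQ_qpoch: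
  assumes "\<bar>q\<bar> < 1"
  shows "(\<lambda>n. qpoch x q n) \<longlonglongrightarrow> qpoch_inf x q"
proof -
  have "(\<lambda>n. \<Prod>i\<le>n. 1 - x * q ^ i) \<longlonglongrightarrow> qpoch_inf x q"
    unfolding qpoch_inf_def by (rule convergent_prod_LIMSEQ[OF convergent_prod_qpoch[OF assms]])
  then have "(\<lambda>n. qpoch x q (Suc n)) \<longlonglongrightarrow> qpoch_inf x q"
    by (simp add: qpoch_def lessThan_Suc_atMost)
  then show ?thesis by (rule LIMSEQ_imp_Suc)
qed

lemma qpoch_Suc: "qpoch x q (Suc n) = qpoch x q n * (1 - x * q ^ n)"
  by (simp add: qpoch_def)

lemma one_le_qpoch:
  assumes "x \<le> 0" "0 \<le> q"
  shows "1 \<le> qpoch x q n"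
  unfolding qpoch_def
  by (rule prod_ge_1) (use assms in \<open>auto simp: mult_nonpos_nonneg\<close>)

lemma qpoch_le_exp:
  assumes "x \<le> 0" "0 \<le> q" "q < 1"
  shows "qpoch x q n \<le> exp (- x / (1 - q))"
proof -
  have "qpoch x q n \<le> (\<Prod>j<n. exp (- x * q ^ j))"
    unfolding qpoch_def
  proof (rule prod_mono)
    fix j
    have "x * q ^ j \<le> 0" using assms by (simp add: mult_nonpos_nonneg)
    then show "0 \<le> 1 - x * q ^ j \<and> 1 - x * q ^ j \<le> exp (- x * q ^ j)"
      using exp_ge_add_one_self[of "- x * q ^ j"] by simp
  qed
  also have "\<dots> = exp (- x * (\<Sum>j<n. q ^ j))"
    by (simp add: exp_sum sum_distrib_left)
  also have "\<dots> \<le> exp (- x / (1 - q))"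
  proof -
    have "(\<Sum>j<n. q ^ j) \<le> 1 / (1 - q)"
      using assms by (simp add: sum_gp_strict divide_right_mono)
    then have "- x * (\<Sum>j<n. q ^ j) \<le> - x * (1 / (1 - q))"
      using assms by (intro mult_left_mono) auto
    then show ?thesis by simp
  qed
  finally show ?thesis .
qed

lemma one_le_qpoch_inf:
  assumes "x \<le> 0" "0 \<le> q" "q < 1"
  shows "1 \<le> qpoch_inf x q"
  by (rule LIMSEQ_le_const[OF LIMSEQ_qpoch]) (use one_le_qpoch assms in auto)

lemma qpoch_inf_le_exp:
  assumes "x \<le> 0" "0 \<le> q" "q < 1"
  shows "qpoch_inf x q \<le> exp (- x / (1 - q))"
  by (rule LIMSEQ_le_const2[OF LIMSEQ_qpoch]) (use qpoch_le_exp assms in auto)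

lemma one_minus_le_qpoch_inf:
  assumes "x \<le> 0" "0 \<le> q" "q < 1"
  shows "1 - x \<le> qpoch_inf x q"
proof -
  have "1 \<le> qpoch_inf (x * q) q"
    using assms by (intro one_le_qpoch_inf) (auto intro: mult_nonpos_nonneg)
  then show ?thesis
    using qpoch_inf_unfold[of q x] assms mult_left_mono[of 1 _ "1 - x"] by simp
qed

lemma qpoch_pos:
  assumes "0 \<le> x" "x < 1" "0 \<le> q" "q \<le> 1"
  shows "0 < qpoch x q n"
proof -
  have "x * q ^ j < 1" for j
    using assms mult_left_le[of "q ^ j" x] by (simp add: power_le_one)
  then show ?thesis unfolding qpoch_def by (simp add: prod_pos)
qed

lemma qpoch_inf_pos:
  assumes "0 \<le> x" "x < 1" "0 \<le> q" "q < 1"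
  shows "0 < qpoch_inf x q"
proof -
  have factor_pos: "0 < 1 - x * q ^ j" for j
    using assms mult_left_le[of "q ^ j" x] by (simp add: power_le_one)
  have "0 \<le> qpoch_inf x q"
    by (rule LIMSEQ_le_const[OF LIMSEQ_qpoch]) (use qpoch_pos[of x q] assms in \<open>auto intro: less_imp_le\<close>)
  moreover have "qpoch_inf x q \<noteq> 0"
    unfolding qpoch_inf_def
    by (rule prodinf_nonzero[OF convergent_prod_qpoch]) (use assms factor_pos in \<open>auto simp: less_le\<close>)
  ultimately show ?thesis by simp
qed

section \<open>Euler's identities\<close>

lemma sum_q_power_div_qpoch:
  assumes "0 < q" "q < 1"
  shows "(\<Sum>k\<le>N. q ^ k / qpoch q q k) = 1 / qpoch q q N"
proof (induction N)
  case 0 then show ?case by (simp add: qpoch_def)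
next
  case (Suc N)
  have "0 < qpoch q q N" using assms by (intro qpoch_pos) auto
  moreover have "q * q ^ N < 1"
    using power_Suc_less_one[OF assms] by simp
  ultimately show ?case
    using Suc by (simp add: qpoch_Suc field_simps)
qed

lemma sums_q_power_div_qpoch:
  assumes "0 < q" "q < 1"
  shows "(\<lambda>k. q ^ k / qpoch q q k) sums (1 / qpoch_inf q q)"
proof -
  have "(\<lambda>N. 1 / qpoch q q N) \<longlonglongrightarrow> 1 / qpoch_inf q q"
    using assms qpoch_inf_pos[of q q] by (intro tendsto_divide tendsto_const LIMSEQ_qpoch) auto
  then show ?thesis
    unfolding sums_def_le sum_q_power_div_qpoch[OF assms] .
qed

definition euler_coeff :: "real \<Rightarrow> nat \<Rightarrow> real" where
  "euler_coeff q k = q powr (real k * (real k - 1) / 2) / qpoch q q k"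

lemma euler_coeff_nonneg:
  assumes "0 < q" "q < 1"
  shows "0 \<le> euler_coeff q k"
  unfolding euler_coeff_def using assms qpoch_pos[of q q k] by simp

lemma euler_coeff_Suc:
  assumes "0 < q" "q < 1"
  shows "euler_coeff q (Suc k) = euler_coeff q k * q ^ k / (1 - q ^ Suc k)"
proof -
  have "real (Suc k) * (real (Suc k) - 1) / 2 = real k * (real k - 1) / 2 + real k"
    by (simp add: field_simps)
  then have "q powr (real (Suc k) * (real (Suc k) - 1) / 2) = q powr (real k * (real k - 1) / 2) * q ^ k"
    using assms by (simp only: powr_add powr_realpow)
  moreover have "0 < qpoch q q k" using assms by (intro qpoch_pos) auto
  moreover have "q ^ Suc k < 1" using power_Suc_less_one[OF assms] .
  ultimately show ?thesis
    unfolding euler_coeff_def by (simp add: qpoch_Suc field_simps)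
qed

lemma summable_euler_series:
  assumes "0 < q" "q < 1"
  shows "summable (\<lambda>k. euler_coeff q k * w ^ k)"
proof -
  have "(\<lambda>k. q ^ k * \<bar>w\<bar>) \<longlonglongrightarrow> 0 * \<bar>w\<bar>"
    using assms by (intro tendsto_intros) auto
  then have "eventually (\<lambda>k. q ^ k * \<bar>w\<bar> < (1 - q) / 2) sequentially"
    using assms by (intro order_tendstoD) auto
  then obtain N where N: "\<And>k. k \<ge> N \<Longrightarrow> q ^ k * \<bar>w\<bar> < (1 - q) / 2"
    by (auto simp: eventually_sequentially)
  show ?thesis
  proof (rule summable_ratio_test[of "1/2" N])
    fix k assume "N \<le> k"
    have "q ^ Suc k \<le> q" using assms by (simp add: mult_left_le power_le_one)
    then have "q ^ k * \<bar>w\<bar> / (1 - q ^ Suc k) \<le> q ^ k * \<bar>w\<bar> / (1 - q)"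
      using assms power_Suc_less_one[OF assms, of k] by (intro divide_left_mono) auto
    also have "\<dots> \<le> 1 / 2"
      using N[OF \<open>N \<le> k\<close>] assms by (simp add: field_simps)
    finally have ratio: "q ^ k * \<bar>w\<bar> / (1 - q ^ Suc k) \<le> 1 / 2" .
    have "norm (euler_coeff q (Suc k) * w ^ Suc k)
        = norm (euler_coeff q k * w ^ k) * (q ^ k * \<bar>w\<bar> / (1 - q ^ Suc k))"
      using assms euler_coeff_nonneg[OF assms] power_Suc_less_one[OF assms, of k]
      by (simp add: euler_coeff_Suc[OF assms] abs_mult power_abs mult_ac)
    also have "\<dots> \<le> norm (euler_coeff q k * w ^ k) * (1 / 2)"
      by (rule mult_left_mono[OF ratio]) simp
    finally show "norm (euler_coeff q (Suc k) * w ^ Suc k) \<le> 1 / 2 * norm (euler_coeff q k * w ^ k)"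
      by (simp add: mult.commute)
  qed simp
qed

lemma euler_series_functional_eq:
  assumes "0 < q" "q < 1"
  shows "(\<Sum>k. euler_coeff q k * w ^ k) = (1 + w) * (\<Sum>k. euler_coeff q k * (q * w) ^ k)"
proof -
  have s1: "summable (\<lambda>k. euler_coeff q k * w ^ k)"
    and s2: "summable (\<lambda>k. euler_coeff q k * (q * w) ^ k)"
    by (rule summable_euler_series[OF assms])+
  have s3: "summable (\<lambda>k. euler_coeff q (Suc k) * (q * w) ^ Suc k)"
    using s2 by (subst summable_Suc_iff)
  have coeff_step: "euler_coeff q (Suc k) * w ^ Suc k
      = euler_coeff q (Suc k) * (q * w) ^ Suc k + w * (euler_coeff q k * (q * w) ^ k)" for k
    using assms power_Suc_less_one[OF assms, of k]
    by (simp add: euler_coeff_Suc[OF assms] power_mult_distrib field_simps)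
  have head: "euler_coeff q 0 = 1"
    using assms by (simp add: euler_coeff_def qpoch_def)
  have "(\<Sum>k. euler_coeff q k * w ^ k) = 1 + (\<Sum>k. euler_coeff q (Suc k) * w ^ Suc k)"
    using suminf_split_head[OF s1] head by simp
  also have "\<dots> = 1 + ((\<Sum>k. euler_coeff q (Suc k) * (q * w) ^ Suc k) + w * (\<Sum>k. euler_coeff q k * (q * w) ^ k))"
    by (simp only: coeff_step suminf_add[OF s3 summable_mult[OF s2], symmetric] suminf_mult[OF s2])
  also have "(\<Sum>k. euler_coeff q (Suc k) * (q * w) ^ Suc k) = (\<Sum>k. euler_coeff q k * (q * w) ^ k) - 1"
    using suminf_split_head[OF s2] head by simp
  finally show ?thesis by (simp add: algebra_simps)
qed

theorem euler_series_sums: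
  assumes "0 < q" "q < 1"
  shows "(\<lambda>k. euler_coeff q k * w ^ k) sums qpoch_inf (- w) q"
proof -
  define E where "E w = (\<Sum>k. euler_coeff q k * w ^ k)" for w
  have functional_eq: "E v = (1 + v) * E (q * v)" for v
    unfolding E_def by (rule euler_series_functional_eq[OF assms])
  have iter: "E w = qpoch (- w) q N * E (q ^ N * w)" for N
  proof (induction N)
    case (Suc N)
    then show ?case
      using functional_eq[of "q ^ N * w"] by (simp add: qpoch_Suc algebra_simps)
  qed (simp add: qpoch_def)
  have "isCont E 0"
    unfolding E_def by (rule isCont_powser[of _ 1]) (use summable_euler_series[OF assms, of 1] in auto)
  moreover have "(\<lambda>N. q ^ N * w) \<longlonglongrightarrow> 0"
    by (intro tendsto_mult_left_zero LIMSEQ_power_zero) (use assms in auto)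
  ultimately have "(\<lambda>N. E (q ^ N * w)) \<longlonglongrightarrow> E 0"
    by (rule isCont_tendsto_compose)
  moreover have "E 0 = 1"
    unfolding E_def powser_zero using assms by (simp add: euler_coeff_def qpoch_def)
  ultimately have "(\<lambda>N. qpoch (- w) q N * E (q ^ N * w)) \<longlonglongrightarrow> qpoch_inf (- w) q * 1"
    using assms by (intro tendsto_mult LIMSEQ_qpoch) auto
  then have "E w = qpoch_inf (- w) q"
    by (simp add: iter[symmetric] LIMSEQ_const_iff)
  then show ?thesis
    using summable_sums[OF summable_euler_series[OF assms, of w]] unfolding E_def by simp
qed

section \<open>Quasi-periodicity of the theta function\<close>

lemma qtheta_mult_q:
  assumes "\<bar>q\<bar> < 1" "q \<noteq> 0" "x \<noteq> 0"
  shows "qtheta q (q * x) = - qtheta q x / x"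
proof -
  have "qtheta q (q * x) = qpoch_inf (q * x) q * ((1 - 1 / x) * qpoch_inf (q / x) q)"
    unfolding qtheta_def using assms qpoch_inf_unfold[OF assms(1), of "1 / x"] by simp
  also have "\<dots> = - ((1 - x) * qpoch_inf (x * q) q * qpoch_inf (q / x) q) / x"
    using assms by (simp add: field_simps)
  also have "\<dots> = - qtheta q x / x"
    unfolding qtheta_def qpoch_inf_unfold[OF assms(1), of x] ..
  finally show ?thesis .
qed

lemma one_le_qtheta:
  assumes "x < 0" "0 \<le> q" "q < 1"
  shows "1 \<le> qtheta q x"
proof -
  have "1 \<le> qpoch_inf x q" "1 \<le> qpoch_inf (q / x) q"
    using assms by (auto intro!: one_le_qpoch_inf divide_nonneg_neg)
  then show ?thesis
    unfolding qtheta_def using mult_mono[of 1 _ 1] by fastforce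
qed

lemma qtheta_shift:
  fixes m :: int
  assumes "0 < q" "q < 1" "0 < t"
  shows "t powr real_of_int m * q powr (real_of_int m ^ 2 / 2) * qtheta q (- t * q powr (real_of_int m + 1/2))
       = qtheta q (- t * sqrt q)"
proof -
  define g where
    "g m = t powr real_of_int m * q powr (real_of_int m ^ 2 / 2) * qtheta q (- t * q powr (real_of_int m + 1/2))"
    for m :: int
  have step: "g (m + 1) = g m" for m
  proof -
    define y where "y = t * q powr (real_of_int m + 1/2)"
    have "0 < y" unfolding y_def using assms by simp
    have "real_of_int (m + 1) + 1/2 = (real_of_int m + 1/2) + 1" by simp
    then have "q powr (real_of_int (m + 1) + 1/2) = q powr (real_of_int m + 1/2) * q"
      using assms by (simp only: powr_add) simp
    then have "qtheta q (- t * q powr (real_of_int (m + 1) + 1/2)) = qtheta q (q * - y)"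
      unfolding y_def by (simp add: algebra_simps)
    also have "\<dots> = qtheta q (- y) / y"
      using assms \<open>0 < y\<close> by (subst qtheta_mult_q) auto
    finally have "qtheta q (- t * q powr (real_of_int (m + 1) + 1/2)) = qtheta q (- y) / y" .
    moreover have "t powr real_of_int (m + 1) = t powr real_of_int m * t"
      using assms by (simp add: powr_add)
    moreover have "q powr (real_of_int (m + 1) ^ 2 / 2) = q powr (real_of_int m ^ 2 / 2) * q powr (real_of_int m + 1/2)"
      by (simp add: power2_eq_square field_simps flip: powr_add)
    ultimately show ?thesis
      unfolding g_def using \<open>0 < y\<close> by (simp add: y_def field_simps)
  qed
  have "g m = g 0"
    by (induction m rule: int_induct[where k = 0]) (use step[of "_ - 1"] step in simp_all)
  then show ?thesis
    unfolding g_def using assms by (simp add: powr_half_sqrt)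
qed

section \<open>The law of \<open>\<chi> + S\<close>\<close>

definition chi_mass :: "real \<Rightarrow> nat \<Rightarrow> real" where
  "chi_mass q k = q ^ k / qpoch q q k * qpoch_inf q q"

definition S_mass :: "real \<Rightarrow> real \<Rightarrow> int \<Rightarrow> real" where
  "S_mass q t l = t powr (real_of_int l) * q powr (real_of_int l ^ 2 / 2)
                   / (qpoch_inf q q * qtheta q (- t * sqrt q))"

definition chiS_mass :: "real \<Rightarrow> real \<Rightarrow> int \<Rightarrow> real" where
  "chiS_mass q t m = t * q powr (real_of_int m - 1/2) / qpoch_inf (- t * q powr (real_of_int m - 1/2)) q"

definition chiS_cdf :: "real \<Rightarrow> real \<Rightarrow> int \<Rightarrow> real" where
  "chiS_cdf q t n = 1 / qpoch_inf (- t * q powr (1/2 + real_of_int n)) q"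

lemma chi_mass_nonneg:
  assumes "0 < q" "q < 1"
  shows "0 \<le> chi_mass q k"
  unfolding chi_mass_def using assms qpoch_pos[of q q k] qpoch_inf_pos[of q q] by simp

lemma S_mass_nonneg:
  assumes "0 < q" "q < 1" "0 < t"
  shows "0 \<le> S_mass q t l"
  unfolding S_mass_def using assms qpoch_inf_pos[of q q] one_le_qtheta[of "- t * sqrt q" q] by simp

lemma sums_chi_mass:
  assumes "0 < q" "q < 1"
  shows "chi_mass q sums 1"
proof -
  have "(\<lambda>k. q ^ k / qpoch q q k * qpoch_inf q q) sums (1 / qpoch_inf q q * qpoch_inf q q)"
    by (rule sums_mult2[OF sums_q_power_div_qpoch[OF assms]])
  then show ?thesis
    using assms qpoch_inf_pos[of q q] unfolding chi_mass_def[abs_def] by simp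
qed

lemma chi_mass_times_S_mass:
  assumes "0 < q" "q < 1" "0 < t"
  shows "chi_mass q k * S_mass q t (m - int k) =
    t powr real_of_int m * q powr (real_of_int m ^ 2 / 2) / qtheta q (- t * sqrt q)
    * (euler_coeff q k * (q powr (3/2 - real_of_int m) / t) ^ k)"
proof -
  have "0 < qpoch_inf q q" "0 < qpoch q q k"
    using assms by (auto intro: qpoch_inf_pos qpoch_pos)
  have t_power: "t powr real_of_int (m - int k) = t powr real_of_int m / t ^ k"
    using assms by (simp add: powr_diff powr_realpow)
  have w_power: "(q powr (3/2 - real_of_int m) / t) ^ k = q powr (real k * (3/2 - real_of_int m)) / t ^ k"
    using assms by (simp add: power_divide powr_power)
  have q_power: "q ^ k * q powr (real_of_int (m - int k) ^ 2 / 2)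
      = q powr (real_of_int m ^ 2 / 2) * q powr (real k * (real k - 1) / 2) * q powr (real k * (3/2 - real_of_int m))"
  proof -
    have "q ^ k * q powr (real_of_int (m - int k) ^ 2 / 2) = q powr (real k + real_of_int (m - int k) ^ 2 / 2)"
      using assms by (simp add: powr_add powr_realpow)
    also have "real k + real_of_int (m - int k) ^ 2 / 2
        = real_of_int m ^ 2 / 2 + real k * (real k - 1) / 2 + real k * (3/2 - real_of_int m)"
      by (simp add: power2_eq_square field_simps)
    finally show ?thesis
      by (simp only: powr_add)
  qed
  have "chi_mass q k * S_mass q t (m - int k)
      = q ^ k * q powr (real_of_int (m - int k) ^ 2 / 2) * t powr real_of_int (m - int k)
        / (qpoch q q k * qtheta q (- t * sqrt q))"
    unfolding chi_mass_def S_mass_def using \<open>0 < qpoch_inf q q\<close> by (simp add: field_simps)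
  also have "\<dots> = q powr (real_of_int m ^ 2 / 2) * q powr (real k * (real k - 1) / 2)
        * q powr (real k * (3/2 - real_of_int m)) * (t powr real_of_int m / t ^ k)
        / (qpoch q q k * qtheta q (- t * sqrt q))"
    by (simp only: q_power t_power)
  also have "\<dots> = t powr real_of_int m * q powr (real_of_int m ^ 2 / 2) / qtheta q (- t * sqrt q)
      * (euler_coeff q k * (q powr (3/2 - real_of_int m) / t) ^ k)"
    unfolding w_power euler_coeff_def using \<open>0 < qpoch q q k\<close> by (simp add: field_simps)
  finally show ?thesis .
qed

lemma chiS_mass_eq_qtheta_quotient:
  assumes "0 < q" "q < 1" "0 < t"
  shows "t powr real_of_int m * q powr (real_of_int m ^ 2 / 2) / qtheta q (- t * sqrt q)
      * qpoch_inf (- (q powr (3/2 - real_of_int m) / t)) q = chiS_mass q t m"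
proof -
  define w where "w = q powr (3/2 - real_of_int m) / t"
  define y where "y = t * q powr (real_of_int m - 1/2)"
  define X where "X = t powr real_of_int (m - 1) * q powr (real_of_int (m - 1) ^ 2 / 2)"
  have "0 < y" "0 < X" unfolding y_def X_def using assms by simp_all
  have "1 \<le> qpoch_inf (- w) q" "1 \<le> qpoch_inf (- y) q"
    unfolding w_def y_def using assms by (auto intro: one_le_qpoch_inf)
  have "q powr (3/2 - real_of_int m) * q powr (real_of_int m - 1/2) = q"
    using assms by (simp flip: powr_add)
  then have "q / y = w"
    unfolding w_def y_def using assms by (simp add: field_simps)
  then have theta_y: "qtheta q (- y) = qpoch_inf (- y) q * qpoch_inf (- w) q"
    unfolding qtheta_def by simp
  have shift: "X * qtheta q (- y) = qtheta q (- t * sqrt q)"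
    using qtheta_shift[OF assms, of "m - 1"] unfolding X_def y_def by (simp add: algebra_simps)
  have m_eq: "real_of_int m = real_of_int (m - 1) + 1" by simp
  have "t powr real_of_int m = t powr real_of_int (m - 1) * t"
    unfolding m_eq powr_add using assms by simp
  moreover have "q powr (real_of_int m ^ 2 / 2)
      = q powr (real_of_int (m - 1) ^ 2 / 2) * q powr (real_of_int m - 1/2)"
    by (simp add: power2_eq_square field_simps flip: powr_add)
  ultimately have "t powr real_of_int m * q powr (real_of_int m ^ 2 / 2) = X * y"
    unfolding X_def y_def by (simp only: mult_ac)
  then have "t powr real_of_int m * q powr (real_of_int m ^ 2 / 2) / qtheta q (- t * sqrt q)
      * qpoch_inf (- w) q = y / qpoch_inf (- y) q"
    unfolding shift[symmetric] theta_y
    using \<open>0 < X\<close> \<open>1 \<le> qpoch_inf (- w) q\<close> \<open>1 \<le> qpoch_inf (- y) q\<close> by (simp add: field_simps)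
  also have "\<dots> = chiS_mass q t m"
    unfolding chiS_mass_def y_def by simp
  finally show ?thesis
    unfolding w_def .
qed

lemma chi_S_convolution_sums:
  assumes "0 < q" "q < 1" "0 < t"
  shows "(\<lambda>k. chi_mass q k * S_mass q t (m - int k)) sums chiS_mass q t m"
  unfolding chi_mass_times_S_mass[OF assms] chiS_mass_eq_qtheta_quotient[OF assms, symmetric]
  by (rule sums_mult[OF euler_series_sums[OF assms(1,2)]])

lemma chiS_cdf_pos:
  assumes "0 < q" "q < 1" "0 < t"
  shows "0 < chiS_cdf q t n"
  unfolding chiS_cdf_def using assms one_le_qpoch_inf[of "- t * q powr (1/2 + real_of_int n)" q] by simp

lemma chiS_mass_nonneg:
  assumes "0 < q" "q < 1" "0 < t"
  shows "0 \<le> chiS_mass q t m"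
  unfolding chiS_mass_def using assms one_le_qpoch_inf[of "- t * q powr (real_of_int m - 1/2)" q] by simp

lemma chiS_mass_eq_diff:
  assumes "0 < q" "q < 1" "0 < t"
  shows "chiS_mass q t m = chiS_cdf q t m - chiS_cdf q t (m - 1)"
proof -
  define y where "y = t * q powr (real_of_int m - 1/2)"
  define P where "P = qpoch_inf (- t * q powr (1/2 + real_of_int m)) q"
  have "0 < y" unfolding y_def using assms by simp
  have "1 \<le> P" unfolding P_def using assms by (intro one_le_qpoch_inf) auto
  have "1/2 + real_of_int m = (real_of_int m - 1/2) + 1" by simp
  then have "y * q = t * q powr (1/2 + real_of_int m)"
    unfolding y_def using assms by (simp only: powr_add) simp
  then have unfold_y: "qpoch_inf (- y) q = (1 + y) * P"
    unfolding P_def using qpoch_inf_unfold[of q "- y"] assms by simp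
  have "1/2 + real_of_int (m - 1) = real_of_int m - 1/2" by simp
  then have cdf_prev: "chiS_cdf q t (m - 1) = 1 / qpoch_inf (- y) q"
    unfolding chiS_cdf_def y_def by simp
  have mass_eq: "chiS_mass q t m = y / qpoch_inf (- y) q"
    and cdf_eq: "chiS_cdf q t m = 1 / P"
    unfolding chiS_mass_def chiS_cdf_def y_def P_def by simp_all
  show ?thesis
    unfolding mass_eq cdf_eq cdf_prev unfold_y using \<open>0 < y\<close> \<open>1 \<le> P\<close>
    by (simp add: diff_divide_distrib[symmetric] divide_simps)
qed

lemma chiS_cdf_tendsto_bot:
  assumes "0 < q" "q < 1" "0 < t"
  shows "(\<lambda>N. chiS_cdf q t (n - int N)) \<longlonglongrightarrow> 0"
proof (rule tendsto_sandwich[OF _ _ tendsto_const])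
  define C where "C = t * q powr (1/2 + real_of_int n)"
  have "0 < C" unfolding C_def using assms by simp
  show "eventually (\<lambda>N. 0 \<le> chiS_cdf q t (n - int N)) sequentially"
    using chiS_cdf_pos[OF assms] by (simp add: less_imp_le)
  have "chiS_cdf q t (n - int N) \<le> q ^ N / C" for N
  proof -
    have "1/2 + real_of_int (n - int N) = (1/2 + real_of_int n) - real N" by simp
    then have "q powr (1/2 + real_of_int (n - int N)) = q powr (1/2 + real_of_int n) / q ^ N"
      using assms by (simp only: powr_diff powr_realpow)
    then have "C / q ^ N \<le> qpoch_inf (- t * q powr (1/2 + real_of_int (n - int N))) q"
      using assms one_minus_le_qpoch_inf[of "- t * q powr (1/2 + real_of_int (n - int N))" q]
      unfolding C_def by simp
    moreover have "0 < C / q ^ N" using assms \<open>0 < C\<close> by simp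
    ultimately have "chiS_cdf q t (n - int N) \<le> 1 / (C / q ^ N)"
      unfolding chiS_cdf_def by (intro divide_left_mono mult_pos_pos) auto
    then show ?thesis by simp
  qed
  then show "eventually (\<lambda>N. chiS_cdf q t (n - int N) \<le> q ^ N / C) sequentially"
    by simp
  show "(\<lambda>N. q ^ N / C) \<longlonglongrightarrow> 0"
    using assms by (intro tendsto_divide_zero LIMSEQ_power_zero) auto
qed

lemma chiS_cdf_tendsto_top:
  assumes "0 < q" "q < 1" "0 < t"
  shows "(\<lambda>N. chiS_cdf q t (int N)) \<longlonglongrightarrow> 1"
proof -
  define x where "x N = t * q powr (1/2) * q ^ N" for N
  have x_eq: "t * q powr (1/2 + real N) = x N" for N
    unfolding x_def using assms by (simp add: powr_add powr_realpow)
  have "x \<longlonglongrightarrow> 0"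
    unfolding x_def using assms by (intro tendsto_mult_right_zero LIMSEQ_power_zero) auto
  have "(\<lambda>N. qpoch_inf (- x N) q) \<longlonglongrightarrow> 1"
  proof (rule tendsto_sandwich[OF _ _ tendsto_const])
    show "eventually (\<lambda>N. 1 \<le> qpoch_inf (- x N) q) sequentially"
      unfolding x_def using assms by (intro always_eventually allI one_le_qpoch_inf) auto
    show "eventually (\<lambda>N. qpoch_inf (- x N) q \<le> exp (x N / (1 - q))) sequentially"
      using assms qpoch_inf_le_exp[of "- x _" q] unfolding x_def by (intro always_eventually allI) simp
    have "(\<lambda>N. exp (x N / (1 - q))) \<longlonglongrightarrow> exp (0 / (1 - q))"
      by (intro tendsto_intros \<open>x \<longlonglongrightarrow> 0\<close>) (use assms in auto)
    then show "(\<lambda>N. exp (x N / (1 - q))) \<longlonglongrightarrow> 1" by simp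
  qed
  then have "(\<lambda>N. 1 / qpoch_inf (- x N) q) \<longlonglongrightarrow> 1 / 1"
    by (intro tendsto_divide tendsto_const) auto
  then show ?thesis
    unfolding chiS_cdf_def by (simp add: x_eq)
qed

lemma sums_chiS_mass_atMost:
  assumes "0 < q" "q < 1" "0 < t"
  shows "(\<lambda>j. chiS_mass q t (n - int j)) sums chiS_cdf q t n"
proof -
  have "(\<lambda>j. chiS_cdf q t (n - int j) - chiS_cdf q t (n - int (Suc j))) sums (chiS_cdf q t (n - int 0) - 0)"
    by (rule telescope_sums'[OF chiS_cdf_tendsto_bot[OF assms]])
  then show ?thesis
    by (simp add: chiS_mass_eq_diff[OF assms] algebra_simps)
qed

lemma nn_integral_count_space_convolution:
  fixes f :: "nat \<Rightarrow> ennreal" and g :: "int \<Rightarrow> ennreal"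
  shows "(\<integral>\<^sup>+k. f k * (\<integral>\<^sup>+l. g l * indicator A (int k + l) \<partial>count_space UNIV) \<partial>count_space UNIV)
       = (\<integral>\<^sup>+m. (\<integral>\<^sup>+k. f k * g (m - int k) \<partial>count_space UNIV) * indicator A m \<partial>count_space UNIV)"
proof -
  have shift: "(\<integral>\<^sup>+l. g l * indicator A (int k + l) \<partial>count_space UNIV)
      = (\<integral>\<^sup>+m. g (m - int k) * indicator A m \<partial>count_space UNIV)" for k
  proof -
    have "bij_betw (\<lambda>m. m - int k) UNIV UNIV"
      by (rule bij_betwI[where g = "\<lambda>l. l + int k"]) auto
    from nn_integral_bij_count_space[OF this, of "\<lambda>l. g l * indicator A (int k + l)"]
    show ?thesis by simp
  qed
  have "(\<integral>\<^sup>+k. f k * (\<integral>\<^sup>+l. g l * indicator A (int k + l) \<partial>count_space UNIV) \<partial>count_space UNIV)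
      = (\<integral>\<^sup>+k. (\<integral>\<^sup>+m. f k * g (m - int k) * indicator A m \<partial>count_space UNIV) \<partial>count_space UNIV)"
    unfolding shift by (simp add: nn_integral_cmult mult.assoc)
  also have "\<dots> = (\<integral>\<^sup>+m. (\<integral>\<^sup>+k. f k * g (m - int k) * indicator A m \<partial>count_space UNIV) \<partial>count_space UNIV)"
    by (rule nn_integral_count_space_nn_integral[symmetric]) auto
  also have "\<dots> = (\<integral>\<^sup>+m. (\<integral>\<^sup>+k. f k * g (m - int k) \<partial>count_space UNIV) * indicator A m \<partial>count_space UNIV)"
    by (simp add: nn_integral_multc)
  finally show ?thesis .
qed

lemma emeasure_pair_pmf_sum:
  fixes p :: "nat pmf" and r :: "int pmf"
  shows "emeasure (map_pmf (\<lambda>(k, l). int k + l) (pair_pmf p r)) A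
       = (\<integral>\<^sup>+m. (\<integral>\<^sup>+k. ennreal (pmf p k) * ennreal (pmf r (m - int k)) \<partial>count_space UNIV)
           * indicator A m \<partial>count_space UNIV)"
proof -
  have "emeasure (map_pmf (\<lambda>(k, l). int k + l) (pair_pmf p r)) A
      = (\<integral>\<^sup>+x. indicator ((\<lambda>(k, l). int k + l) -` A) x \<partial>measure_pmf (pair_pmf p r))"
    by simp
  also have "\<dots> = (\<integral>\<^sup>+k. \<integral>\<^sup>+l. indicator A (int k + l) \<partial>measure_pmf r \<partial>measure_pmf p)"
    unfolding nn_integral_pair_pmf' by (simp add: indicator_def)
  also have "\<dots> = (\<integral>\<^sup>+k. ennreal (pmf p k) * (\<integral>\<^sup>+l. ennreal (pmf r l) * indicator A (int k + l)
      \<partial>count_space UNIV) \<partial>count_space UNIV)"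
    unfolding nn_integral_measure_pmf ..
  finally show ?thesis
    unfolding nn_integral_count_space_convolution .
qed

lemma nn_integral_count_space_sums:
  fixes f :: "nat \<Rightarrow> real"
  assumes "f sums s" "\<And>k. 0 \<le> f k"
  shows "(\<integral>\<^sup>+k. ennreal (f k) \<partial>count_space UNIV) = ennreal s"
  using assms by (simp add: nn_integral_count_space_nat suminf_ennreal2 sums_summable sums_unique[symmetric])

lemma nn_integral_chi_mass:
  assumes "0 < q" "q < 1"
  shows "(\<integral>\<^sup>+k. ennreal (chi_mass q k) \<partial>count_space UNIV) = 1"
  using nn_integral_count_space_sums[OF sums_chi_mass[OF assms] chi_mass_nonneg[OF assms]] by simp

lemma nn_integral_chi_S_convolution:
  assumes "0 < q" "q < 1" "0 < t"
  shows "(\<integral>\<^sup>+k. ennreal (chi_mass q k) * ennreal (S_mass q t (m - int k)) \<partial>count_space UNIV)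
       = ennreal (chiS_mass q t m)"
  using nn_integral_count_space_sums[OF chi_S_convolution_sums[OF assms]]
    chi_mass_nonneg[OF assms(1,2)] S_mass_nonneg[OF assms]
  by (simp add: ennreal_mult)

lemma nn_integral_chiS_mass_atMost:
  assumes "0 < q" "q < 1" "0 < t"
  shows "(\<integral>\<^sup>+m. ennreal (chiS_mass q t m) * indicator {..n} m \<partial>count_space UNIV) = ennreal (chiS_cdf q t n)"
proof -
  have "bij_betw (\<lambda>j::nat. n - int j) UNIV {..n}"
    by (rule bij_betwI[where g = "\<lambda>m. nat (n - m)"]) auto
  then have "(\<integral>\<^sup>+m. ennreal (chiS_mass q t m) \<partial>count_space {..n})
      = (\<integral>\<^sup>+j. ennreal (chiS_mass q t (n - int j)) \<partial>count_space UNIV)"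
    by (rule nn_integral_bij_count_space[symmetric])
  also have "\<dots> = ennreal (chiS_cdf q t n)"
    by (rule nn_integral_count_space_sums[OF sums_chiS_mass_atMost[OF assms] chiS_mass_nonneg[OF assms]])
  finally show ?thesis
    by (simp add: nn_integral_count_space_indicator)
qed

lemma nn_integral_chiS_mass:
  assumes "0 < q" "q < 1" "0 < t"
  shows "(\<integral>\<^sup>+m. ennreal (chiS_mass q t m) \<partial>count_space UNIV) = 1"
proof -
  define I where "I N = (\<integral>\<^sup>+m. ennreal (chiS_mass q t m) * indicator {..int N} m \<partial>count_space UNIV)" for N
  have "incseq I"
    unfolding I_def incseq_def
    by (auto intro!: nn_integral_mono mult_left_mono split: split_indicator)
  have "(\<lambda>m. ennreal (chiS_mass q t m)) = (\<lambda>m. SUP N. ennreal (chiS_mass q t m) * indicator {..int N} m)"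
  proof
    fix m :: int
    show "ennreal (chiS_mass q t m) = (SUP N. ennreal (chiS_mass q t m) * indicator {..int N} m)"
      by (rule antisym[OF SUP_upper2[of "nat m"] SUP_least]) (auto split: split_indicator)
  qed
  then have "(\<integral>\<^sup>+m. ennreal (chiS_mass q t m) \<partial>count_space UNIV) = (SUP N. I N)"
    unfolding I_def
    by (simp add: nn_integral_monotone_convergence_SUP incseq_def le_fun_def split: split_indicator)
  also have "\<dots> = 1"
  proof (rule LIMSEQ_unique[OF LIMSEQ_SUP[OF \<open>incseq I\<close>]])
    show "I \<longlonglongrightarrow> 1"
      unfolding I_def nn_integral_chiS_mass_atMost[OF assms]
      using tendsto_ennrealI[OF chiS_cdf_tendsto_top[OF assms]] by simp
  qed
  finally show ?thesis .
qed

lemma nn_integral_S_mass: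
  assumes "0 < q" "q < 1" "0 < t"
  shows "(\<integral>\<^sup>+l. ennreal (S_mass q t l) \<partial>count_space UNIV) = 1"
proof -
  \<comment> \<open>Normalising \<open>S\<close> directly would need the Jacobi triple product; instead, the
      convolution identity transfers the known total masses of \<open>\<chi>\<close> and \<open>\<chi> + S\<close> to \<open>S\<close>.\<close>
  have "(\<integral>\<^sup>+l. ennreal (S_mass q t l) \<partial>count_space UNIV)
      = (\<integral>\<^sup>+k. ennreal (chi_mass q k) * (\<integral>\<^sup>+l. ennreal (S_mass q t l) * indicator UNIV (int k + l)
          \<partial>count_space UNIV) \<partial>count_space UNIV)"
    by (simp add: nn_integral_multc nn_integral_chi_mass[OF assms(1,2)])
  also have "\<dots> = (\<integral>\<^sup>+m. ennreal (chiS_mass q t m) \<partial>count_space UNIV)"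
    unfolding nn_integral_count_space_convolution nn_integral_chi_S_convolution[OF assms] by simp
  also have "\<dots> = 1"
    by (rule nn_integral_chiS_mass[OF assms])
  finally show ?thesis .
qed

lemma pmf_chi_pmf:
  assumes "0 < q" "q < 1"
  shows "pmf (chi_pmf q) k = chi_mass q k"
  unfolding chi_pmf_def chi_mass_def[symmetric]
  by (rule pmf_embed_pmf) (use chi_mass_nonneg[OF assms] nn_integral_chi_mass[OF assms] in auto)

lemma pmf_S_pmf:
  assumes "0 < q" "q < 1" "0 < t"
  shows "pmf (S_pmf q t) l = S_mass q t l"
  unfolding S_pmf_def S_mass_def[symmetric]
  by (rule pmf_embed_pmf) (use S_mass_nonneg[OF assms] nn_integral_S_mass[OF assms] in auto)

theorem lemma2p4:
  fixes n :: int and q t :: real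
  assumes "0 < q" "q < 1" "0 < t"
  shows "measure_pmf.prob (chiS_pmf q t) {..n} = 1 / qpoch_inf (- t * q powr (1/2 + real_of_int n)) q"
proof -
  have "emeasure (measure_pmf (chiS_pmf q t)) {..n}
      = (\<integral>\<^sup>+m. (\<integral>\<^sup>+k. ennreal (chi_mass q k) * ennreal (S_mass q t (m - int k)) \<partial>count_space UNIV)
          * indicator {..n} m \<partial>count_space UNIV)"
    unfolding chiS_pmf_def emeasure_pair_pmf_sum pmf_chi_pmf[OF assms(1,2)] pmf_S_pmf[OF assms] ..
  also have "\<dots> = ennreal (chiS_cdf q t n)"
    unfolding nn_integral_chi_S_convolution[OF assms] by (rule nn_integral_chiS_mass_atMost[OF assms])
  finally show ?thesis
    using chiS_cdf_pos[OF assms, of n]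
    by (simp add: measure_pmf.emeasure_eq_measure chiS_cdf_def)
qed

end
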